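(* Consider the model in the context with $\gamma<0$, and let $s,t\in\mathcal{T}$ with $t\geq s+2$ and $t+1\le T$. Under Assumption A, for both $\tau=s$ and $\tau=t$, writing $C_d=\{w^T,y_{s-1}=y_{t-1},y_{s+1}=y_{t+1}=d,\alpha\}$ for $d\in\{0,1\}$: \[ P(E_{\tau+1,1}\mid C_1)=P(y_{\tau}=1\mid C_1)+\frac{F_{\epsilon|\alpha}(w_{\tau+1}+\gamma+\alpha)}{F_{\epsilon|\alpha}(w_{\tau+1}+\alpha)}\big[1-P(y_{\tau}=1\mid C_1)\big], \] \[ P(E_{\tau+1,2}\mid C_0)=\frac{F_{\epsilon|\alpha}(w_{\tau+1}+\alpha)-F_{\epsilon|\alpha}(w_{\tau+1}+\gamma+\alpha)}{1-F_{\epsilon|\alpha}(w_{\tau+1}+\gamma+\alpha)}P(y_{\tau}=1\mid C_0), \] \[ P(E_{\tau+1,3}\mid C_0)=\frac{1-F_{\epsilon|\alpha}(w_{\tau+1}+\alpha)}{1-F_{\epsilon|\alpha}(w_{\tau+1}+\gamma+\alpha)}P(y_{\tau}=1\mid C_0)+1-P(y_{\tau}=1\mid C_0). \]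
   Context: Model: $y_0\in\{0,1\}$ observed and, for $t\in\mathcal{T}=\{1,\dots,T\}$, $y_{t}=1[x_{t}^{\prime}\beta+\gamma y_{t-1}+\alpha-\epsilon_{t}>0]$, $x_t\in\mathbb{R}^K$ observed, $\alpha$ an unobserved individual effect, $\epsilon_t$ unobserved errors. $w_t=x_t'\beta$, $w^T=(w_1,\dots,w_T)$. For each $t$, $E_{t,1}=\{\epsilon_t<w_t+\gamma+\alpha\}$, $E_{t,2}=\{w_t+\gamma+\alpha\le\epsilon_t<w_t+\alpha\}$, $E_{t,3}=\{\epsilon_t\ge w_t+\alpha\}$. Assumption A: for all $\alpha$ and $s,t\in\mathcal{T}$: (a)(i) $\epsilon^T\perp(x^T,y_0)\mid\alpha$, (ii) $\epsilon_s\perp\epsilon_t\mid\alpha$ ($s\ne t$), (iii) $\epsilon_s\overset{d}{=}\epsilon_t\mid\alpha$, with common CDF $F_{\epsilon|\alpha}$; (b) $F_{\epsilon|\alpha}$ absolutely continuous with support $\mathbb{R}$; (c) $x_{ts,1}$ has a.e. positive density on $\mathbb{R}$ given the other components of $x_t-x_s$ and $\alpha$, and $\beta_1\ne0$; (d) the support of $x_t-x_s$ given $\alpha$ is not in a proper linear subspace of $\mathbb{R}^K$; (e) $\|\beta\|_2=1$, $\gamma$ in the interior of a compact $\mathcal{R}$. *)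

theory Defs
  imports "HOL-Probability.Probability"
begin

text \<open>Outcome path of the dynamic binary choice model, conditionally on (w^T, alpha):
  y_0 given, y_n = 1[w_n + gamma y_{n-1} + alpha - eps_n > 0]. True encodes 1.\<close>
fun yseq :: "(nat \<Rightarrow> real) \<Rightarrow> real \<Rightarrow> real \<Rightarrow> bool \<Rightarrow> (nat \<Rightarrow> real) \<Rightarrow> nat \<Rightarrow> bool" where
  "yseq w g a y0 e 0 = y0"
| "yseq w g a y0 e (Suc n) =
     (w (Suc n) + g * (if yseq w g a y0 e n then 1 else 0) + a - e (Suc n) > 0)"

definition ypath :: "(nat \<Rightarrow> real) \<Rightarrow> real \<Rightarrow> real \<Rightarrow> ('a \<Rightarrow> bool) \<Rightarrow> (nat \<Rightarrow> 'a \<Rightarrow> real)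
    \<Rightarrow> 'a \<Rightarrow> nat \<Rightarrow> bool" where
  "ypath w g a y0 eps \<omega> n = yseq w g a (y0 \<omega>) (\<lambda>k. eps k \<omega>) n"

definition Cev :: "(nat \<Rightarrow> real) \<Rightarrow> real \<Rightarrow> real \<Rightarrow> ('a \<Rightarrow> bool) \<Rightarrow> (nat \<Rightarrow> 'a \<Rightarrow> real)
    \<Rightarrow> nat \<Rightarrow> nat \<Rightarrow> bool \<Rightarrow> 'a \<Rightarrow> bool" where
  "Cev w g a y0 eps s t d \<omega> =
     (ypath w g a y0 eps \<omega> (s - 1) = ypath w g a y0 eps \<omega> (t - 1)
      \<and> ypath w g a y0 eps \<omega> (s + 1) = d \<and> ypath w g a y0 eps \<omega> (t + 1) = d)"

end

theory Submission
  imports Defs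
begin

text \<open>Write \<open>k = \<tau> + 1\<close>; since \<open>k \<in> {s + 1, t + 1}\<close>, the event \<open>C\<^sub>d\<close> is contained in
  \<open>{y\<^sub>k = d}\<close>. On \<open>{y\<^sub>k = d}\<close>, replacing the shock \<open>\<epsilon>\<^sub>k\<close> by a constant that forces
  \<open>y\<^sub>k = d\<close> whatever \<open>y\<^sub>\<tau>\<close> is leaves the whole path unchanged. Hence
  \<open>{y\<^sub>\<tau> = b} \<inter> C\<^sub>d \<inter> {\<epsilon>\<^sub>k \<in> S}\<close> is the intersection of a condition on \<open>\<epsilon>\<^sub>k\<close> alone
  (\<open>\<epsilon>\<^sub>k \<in> S\<close> and \<open>\<epsilon>\<^sub>k\<close> produces \<open>y\<^sub>k = d\<close> from \<open>y\<^sub>\<tau> = b\<close>, a half-line condition with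
  endpoint \<open>w\<^sub>k + \<gamma> b + \<alpha>\<close>) with an event built from \<open>y\<^sub>0\<close> and the other shocks, and
  independence factorises its probability as \<open>P(\<epsilon>\<^sub>k \<in> S \<inter> H\<^sub>b\<^sub>d) p\<^sub>b\<^sub>d\<close>. For \<open>\<gamma> \<le> 0\<close>
  the half-lines for \<open>b = 1\<close> and \<open>b = 0\<close> are nested, so every probability in the statement
  is a combination of \<open>F(w\<^sub>k + \<gamma> + \<alpha>)\<close>, \<open>F(w\<^sub>k + \<alpha>)\<close> and the two unknown weights
  \<open>p\<^sub>1\<^sub>d, p\<^sub>0\<^sub>d\<close>; after dividing by \<open>P(C\<^sub>d)\<close> these weights only enter through
  \<open>P(y\<^sub>\<tau> = 1 | C\<^sub>d)\<close>.\<close>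

definition next_choice :: "(nat \<Rightarrow> real) \<Rightarrow> real \<Rightarrow> real \<Rightarrow> nat \<Rightarrow> bool \<Rightarrow> real \<Rightarrow> bool" where
  "next_choice w g a k y x \<longleftrightarrow> w k + g * (if y then 1 else 0) + a - x > 0"

definition forcing_shock :: "(nat \<Rightarrow> real) \<Rightarrow> real \<Rightarrow> real \<Rightarrow> nat \<Rightarrow> bool \<Rightarrow> real" where
  "forcing_shock w g a k d = (if d then w k + a - \<bar>g\<bar> - 1 else w k + a + \<bar>g\<bar> + 1)"

definition shocks_forcing ::
    "(nat \<Rightarrow> real) \<Rightarrow> real \<Rightarrow> real \<Rightarrow> nat \<Rightarrow> bool \<Rightarrow> (nat \<Rightarrow> 'a \<Rightarrow> real) \<Rightarrow> nat \<Rightarrow> 'a \<Rightarrow> real" where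
  "shocks_forcing w g a k d eps = eps(k := \<lambda>_. forcing_shock w g a k d)"

lemma next_choice_forcing_shock: "next_choice w g a k y (forcing_shock w g a k d) = d"
  by (auto simp: next_choice_def forcing_shock_def)

lemma yseq_Suc_next_choice:
  "yseq w g a y0 e (Suc n) = next_choice w g a (Suc n) (yseq w g a y0 e n) (e (Suc n))"
  by (simp add: next_choice_def)

lemma yseq_cong:
  "(\<And>j. 1 \<le> j \<Longrightarrow> j \<le> n \<Longrightarrow> e j = e' j) \<Longrightarrow> yseq w g a y0 e n = yseq w g a y0 e' n"
  by (induction n) auto

lemma yseq_fun_upd_eq:
  assumes "yseq w g a y0 (e(k := x)) k = yseq w g a y0 e k"
  shows "yseq w g a y0 (e(k := x)) n = yseq w g a y0 e n"
proof (induction n)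
  case (Suc n)
  show ?case
  proof (cases "Suc n = k")
    case True
    from assms show ?thesis by (simp only: True)
  next
    case False
    with Suc show ?thesis by simp
  qed
qed simp

lemma measurable_ypath:
  assumes "Measurable.pred N y0" "\<And>j. 1 \<le> j \<Longrightarrow> j \<le> n \<Longrightarrow> eps j \<in> borel_measurable N"
  shows "Measurable.pred N (\<lambda>\<omega>. ypath w g a y0 eps \<omega> n)"
  using assms(2)
proof (induction n)
  case (Suc n)
  then have "eps (Suc n) \<in> borel_measurable N" and "Measurable.pred N (\<lambda>\<omega>. ypath w g a y0 eps \<omega> n)"
    by auto
  then show ?case
    unfolding ypath_def by simp measurable
qed (simp add: ypath_def assms(1))

lemma measurable_Cev:
  assumes "Measurable.pred N y0" "\<And>j. 1 \<le> j \<Longrightarrow> j \<le> T \<Longrightarrow> eps j \<in> borel_measurable N"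
    and "s \<le> t" "t + 1 \<le> T"
  shows "Measurable.pred N (Cev w g a y0 eps s t d)"
proof -
  have path: "Measurable.pred N (\<lambda>\<omega>. ypath w g a y0 eps \<omega> n)" if "n \<le> T" for n
    using assms(1,2) that by (intro measurable_ypath) auto
  have "Measurable.pred N (\<lambda>\<omega>. ypath w g a y0 eps \<omega> (s - 1))"
    and "Measurable.pred N (\<lambda>\<omega>. ypath w g a y0 eps \<omega> (t - 1))"
    and "Measurable.pred N (\<lambda>\<omega>. ypath w g a y0 eps \<omega> (s + 1))"
    and "Measurable.pred N (\<lambda>\<omega>. ypath w g a y0 eps \<omega> (t + 1))"
    using assms(3,4) by (auto intro: path)
  then show ?thesis
    unfolding Cev_def[abs_def] by measurable
qed

lemma Cev_cong:
  assumes "\<And>n. n \<le> T \<Longrightarrow> ypath w g a y0 eps \<omega> n = ypath w g a y0' eps' \<omega>' n"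
    and "s \<le> t" "t + 1 \<le> T"
  shows "Cev w g a y0 eps s t d \<omega> = Cev w g a y0' eps' s t d \<omega>'"
  using assms(1)[of "s - 1"] assms(1)[of "t - 1"] assms(1)[of "s + 1"] assms(1)[of "t + 1"] assms(2,3)
  unfolding Cev_def by simp

lemma ypath_fun_upd:
  "ypath w g a y0 (eps(k := \<lambda>_. x)) \<omega> = yseq w g a (y0 \<omega>) ((\<lambda>j. eps j \<omega>)(k := x))"
  unfolding ypath_def by (rule ext, rule arg_cong[where f="\<lambda>e. yseq w g a (y0 \<omega>) e _"]) auto

lemma Cev_freeze:
  assumes "Suc \<tau> \<in> {s + 1, t + 1}"
  shows "(ypath w g a y0 eps \<omega> \<tau> = b \<and> Cev w g a y0 eps s t d \<omega>) \<longleftrightarrow>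
    (next_choice w g a (Suc \<tau>) b (eps (Suc \<tau>) \<omega>) = d
      \<and> ypath w g a y0 (shocks_forcing w g a (Suc \<tau>) d eps) \<omega> \<tau> = b
      \<and> Cev w g a y0 (shocks_forcing w g a (Suc \<tau>) d eps) s t d \<omega>)"
proof -
  define eps' where "eps' = shocks_forcing w g a (Suc \<tau>) d eps"
  let ?y = "ypath w g a y0 eps \<omega>" and ?y' = "ypath w g a y0 eps' \<omega>"
  have y_eq: "?y = yseq w g a (y0 \<omega>) (\<lambda>j. eps j \<omega>)"
    by (rule ext) (simp add: ypath_def)
  have y'_eq: "?y' = yseq w g a (y0 \<omega>) ((\<lambda>j. eps j \<omega>)(Suc \<tau> := forcing_shock w g a (Suc \<tau>) d))"
    unfolding eps'_def shocks_forcing_def by (rule ypath_fun_upd)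
  have y'_\<tau>: "?y' \<tau> = ?y \<tau>"
    unfolding y_eq y'_eq by (rule yseq_cong) auto
  have y'_Suc: "?y' (Suc \<tau>) = d"
    unfolding y'_eq yseq_Suc_next_choice by (simp add: next_choice_forcing_shock)
  have y_Suc: "?y (Suc \<tau>) = next_choice w g a (Suc \<tau>) (?y \<tau>) (eps (Suc \<tau>) \<omega>)"
    unfolding y_eq by (rule yseq_Suc_next_choice)
  have y'_y: "?y' = ?y" if "?y (Suc \<tau>) = d"
    unfolding y_eq y'_eq by (rule ext, rule yseq_fun_upd_eq) (use that y'_Suc in \<open>simp add: y_eq y'_eq\<close>)
  show ?thesis
    unfolding eps'_def[symmetric] using assms(1) y'_y y'_\<tau> y_Suc unfolding Cev_def by auto
qed

lemma (in prob_space) prob_indep_coordinate_rest: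
  assumes indep: "indep_vars N Y I" and k: "k \<in> I" and A: "A \<in> sets (N k)"
    and Q: "Measurable.pred (PiM (I - {k}) N) Q"
  shows "\<P>(\<omega> in M. Y k \<omega> \<in> A \<and> Q (\<lambda>i\<in>I - {k}. Y i \<omega>))
    = \<P>(\<omega> in M. Y k \<omega> \<in> A) * \<P>(\<omega> in M. Q (\<lambda>i\<in>I - {k}. Y i \<omega>))"
proof -
  let ?Z = "\<lambda>\<omega>. \<lambda>i\<in>I - {k}. Y i \<omega>"
  have ind: "indep_var (PiM {k} N) (\<lambda>\<omega>. \<lambda>i\<in>{k}. Y i \<omega>) (PiM (I - {k}) N) ?Z"
    using k by (intro indep_var_restrict[OF indep]) auto
  have As: "{f \<in> space (PiM {k} N). f k \<in> A} \<in> sets (PiM {k} N)"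
    using measurable_sets[OF measurable_component_singleton[of k "{k}" N] A]
    by (simp add: vimage_def Int_def conj_commute)
  have Qs: "{z \<in> space (PiM (I - {k}) N). Q z} \<in> sets (PiM (I - {k}) N)"
    using Q by (simp add: pred_def)
  have Yk: "(\<lambda>i\<in>{k}. Y i \<omega>) \<in> space (PiM {k} N)" if "\<omega> \<in> space M" for \<omega>
    using measurable_space[OF indep_var_rv1[OF ind] that] .
  have Z: "?Z \<omega> \<in> space (PiM (I - {k}) N)" if "\<omega> \<in> space M" for \<omega>
    using measurable_space[OF indep_var_rv2[OF ind] that] .
  have "(\<lambda>\<omega>. (\<lambda>i\<in>{k}. Y i \<omega>, ?Z \<omega>)) -` ({f \<in> space (PiM {k} N). f k \<in> A}
      \<times> {z \<in> space (PiM (I - {k}) N). Q z}) \<inter> space M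
      = {\<omega> \<in> space M. Y k \<omega> \<in> A \<and> Q (?Z \<omega>)}"
    and "(\<lambda>\<omega>. \<lambda>i\<in>{k}. Y i \<omega>) -` {f \<in> space (PiM {k} N). f k \<in> A} \<inter> space M
      = {\<omega> \<in> space M. Y k \<omega> \<in> A}"
    and "?Z -` {z \<in> space (PiM (I - {k}) N). Q z} \<inter> space M = {\<omega> \<in> space M. Q (?Z \<omega>)}"
    using Yk Z by auto
  with indep_varD[OF ind As Qs] show ?thesis
    by simp
qed

lemma (in prob_space) prob_less_eq_prob_le_if_density:
  fixes X :: "'a \<Rightarrow> real"
  assumes X: "distributed M lborel X g"
  shows "\<P>(\<omega> in M. X \<omega> < x) = \<P>(\<omega> in M. X \<omega> \<le> x)"
proof -
  have [measurable]: "X \<in> borel_measurable M"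
    using distributed_measurable[OF X] by simp
  have "emeasure M (X -` {x} \<inter> space M) = (\<integral>\<^sup>+y. g y * indicator {x} y \<partial>lborel)"
    using X by (rule distributed_emeasure) simp
  also have "\<dots> = 0"
    by (rule nn_integral_null_set) auto
  finally have atom: "\<P>(\<omega> in M. X \<omega> = x) = 0"
    by (simp add: measure_def vimage_def Int_def conj_commute)
  have "prob ({\<omega> \<in> space M. X \<omega> < x} \<union> {\<omega> \<in> space M. X \<omega> = x})
      = \<P>(\<omega> in M. X \<omega> < x) + \<P>(\<omega> in M. X \<omega> = x)"
    by (rule finite_measure_Union) auto
  moreover have "{\<omega> \<in> space M. X \<omega> \<le> x} = {\<omega> \<in> space M. X \<omega> < x} \<union> {\<omega> \<in> space M. X \<omega> = x}"
    by auto
  ultimately show ?thesis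
    using atom by simp
qed

lemma (in prob_space) prob_ge_eq_cdf:
  fixes X :: "'a \<Rightarrow> real"
  assumes [measurable]: "X \<in> borel_measurable M" and F: "\<And>x. \<P>(\<omega> in M. X \<omega> < x) = F x"
  shows "\<P>(\<omega> in M. x \<le> X \<omega>) = 1 - F x"
proof -
  have "{\<omega> \<in> space M. x \<le> X \<omega>} = space M - {\<omega> \<in> space M. X \<omega> < x}"
    by auto
  then show ?thesis
    using prob_compl[of "{\<omega> \<in> space M. X \<omega> < x}"] F by simp
qed

lemma (in prob_space) prob_interval_eq_cdf:
  fixes X :: "'a \<Rightarrow> real"
  assumes [measurable]: "X \<in> borel_measurable M" and F: "\<And>x. \<P>(\<omega> in M. X \<omega> < x) = F x"
    and "x \<le> x'"
  shows "\<P>(\<omega> in M. x \<le> X \<omega> \<and> X \<omega> < x') = F x' - F x"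
proof -
  have "{\<omega> \<in> space M. x \<le> X \<omega> \<and> X \<omega> < x'}
      = {\<omega> \<in> space M. X \<omega> < x'} - {\<omega> \<in> space M. X \<omega> < x}"
    by auto
  moreover have "{\<omega> \<in> space M. X \<omega> < x} \<subseteq> {\<omega> \<in> space M. X \<omega> < x'}"
    using \<open>x \<le> x'\<close> by auto
  ultimately show ?thesis
    using finite_measure_Diff[of "{\<omega> \<in> space M. X \<omega> < x'}" "{\<omega> \<in> space M. X \<omega> < x}"] F
    by simp
qed

lemma ratio_as_mixture:
  fixes q q' u v x x' \<pi> \<pi>' :: real
  assumes "u * q + v * q' \<noteq> 0" and "x * q = \<pi> * (u * q)" and "x' * q' = \<pi>' * (v * q')"
  shows "(x * q + x' * q') / (u * q + v * q')
    = \<pi> * (u * q / (u * q + v * q')) + \<pi>' * (1 - u * q / (u * q + v * q'))"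
proof -
  have "1 - u * q / (u * q + v * q') = v * q' / (u * q + v * q')"
    using assms(1) by (simp add: field_simps)
  moreover have "\<pi> * (u * q / (u * q + v * q')) = x * q / (u * q + v * q')"
    unfolding assms(2) by simp
  moreover have "\<pi>' * (v * q' / (u * q + v * q')) = x' * q' / (u * q + v * q')"
    unfolding assms(3) by simp
  ultimately show ?thesis
    by (simp only: add_divide_distrib)
qed

locale binary_choice_panel = prob_space M
  for M :: "'a measure" and eps :: "nat \<Rightarrow> 'a \<Rightarrow> real" and y0 :: "'a \<Rightarrow> bool"
    and w :: "nat \<Rightarrow> real" and \<gamma> \<alpha> :: real and T :: nat +
  assumes indep_initial_shocks: "indep_vars (\<lambda>_. borel)
    (\<lambda>i \<omega>. if i = 0 then (if y0 \<omega> then 1 else 0) else eps i \<omega>) {0..T}"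
begin

abbreviation primitive_vars :: "nat \<Rightarrow> 'a \<Rightarrow> real" where
  "primitive_vars i \<omega> \<equiv> if i = 0 then (if y0 \<omega> then 1 else 0) else eps i \<omega>"

lemma measurable_shock: "1 \<le> j \<Longrightarrow> j \<le> T \<Longrightarrow> eps j \<in> borel_measurable M"
  using bspec[OF conjunct1[OF indep_initial_shocks[unfolded indep_vars_def2]], of j] by simp

lemma measurable_initial: "Measurable.pred M y0"
proof -
  have "(\<lambda>\<omega>. if y0 \<omega> then 1 else 0 :: real) \<in> borel_measurable M"
    using bspec[OF conjunct1[OF indep_initial_shocks[unfolded indep_vars_def2]], of 0] by simp
  then have "Measurable.pred M (\<lambda>\<omega>. (if y0 \<omega> then 1 else 0 :: real) = 1)"
    by measurable
  moreover have "(\<lambda>\<omega>. (if y0 \<omega> then 1 else 0 :: real) = 1) = y0"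
    by auto
  ultimately show ?thesis
    by simp
qed

text \<open>The weight \<open>p\<^sub>b\<^sub>d\<close>: it only involves \<open>y\<^sub>0\<close> and the shocks other than \<open>\<epsilon>\<^sub>\<tau>\<^sub>+\<^sub>1\<close>.\<close>

definition frozen_prob :: "nat \<Rightarrow> nat \<Rightarrow> nat \<Rightarrow> bool \<Rightarrow> bool \<Rightarrow> real" where
  "frozen_prob s t \<tau> b d = \<P>(\<omega> in M.
     ypath w \<gamma> \<alpha> y0 (shocks_forcing w \<gamma> \<alpha> (Suc \<tau>) d eps) \<omega> \<tau> = b
     \<and> Cev w \<gamma> \<alpha> y0 (shocks_forcing w \<gamma> \<alpha> (Suc \<tau>) d eps) s t d \<omega>)"

context
  fixes s t \<tau> :: nat
  assumes \<tau>: "\<tau> \<in> {s, t}" and s_le_t: "s \<le> t" and t_lt_T: "t + 1 \<le> T"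
begin

lemma measurable_next_shock[measurable]: "eps (Suc \<tau>) \<in> borel_measurable M"
  using \<tau> s_le_t t_lt_T by (intro measurable_shock) auto

lemma frozen_event_measurable_rest:
  obtains Q where "Measurable.pred (PiM ({0..T} - {Suc \<tau>}) (\<lambda>_. borel)) Q"
    and "\<And>\<omega>. Q (\<lambda>i\<in>{0..T} - {Suc \<tau>}. primitive_vars i \<omega>) \<longleftrightarrow>
      ypath w \<gamma> \<alpha> y0 (shocks_forcing w \<gamma> \<alpha> (Suc \<tau>) d eps) \<omega> \<tau> = b
      \<and> Cev w \<gamma> \<alpha> y0 (shocks_forcing w \<gamma> \<alpha> (Suc \<tau>) d eps) s t d \<omega>"
proof
  define L where "L = {0..T} - {Suc \<tau>}"
  define ez where "ez = shocks_forcing w \<gamma> \<alpha> (Suc \<tau>) d (\<lambda>j (z :: nat \<Rightarrow> real). z j)"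
  have "0 \<in> L"
    by (simp add: L_def)
  then have initial: "Measurable.pred (PiM L (\<lambda>_. borel)) (\<lambda>z. z 0 = (1 :: real))"
    by measurable
  have shocks: "ez j \<in> borel_measurable (PiM L (\<lambda>_. borel))" if "1 \<le> j" "j \<le> T" for j
    using that by (cases "j = Suc \<tau>") (auto simp: ez_def shocks_forcing_def L_def)
  have "\<tau> \<le> T"
    using \<tau> s_le_t t_lt_T by auto
  then have "Measurable.pred (PiM L (\<lambda>_. borel)) (\<lambda>z. ypath w \<gamma> \<alpha> (\<lambda>z. z 0 = 1) ez z \<tau>)"
    by (intro measurable_ypath[OF initial] shocks) auto
  moreover have "Measurable.pred (PiM L (\<lambda>_. borel)) (Cev w \<gamma> \<alpha> (\<lambda>z. z 0 = 1) ez s t d)"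
    using s_le_t t_lt_T by (intro measurable_Cev[OF initial] shocks)
  ultimately show "Measurable.pred (PiM L (\<lambda>_. borel))
      (\<lambda>z. ypath w \<gamma> \<alpha> (\<lambda>z. z 0 = 1) ez z \<tau> = b \<and> Cev w \<gamma> \<alpha> (\<lambda>z. z 0 = 1) ez s t d z)"
    by measurable
  fix \<omega>
  have path: "ypath w \<gamma> \<alpha> (\<lambda>z. z 0 = 1) ez (\<lambda>i\<in>L. primitive_vars i \<omega>) n
      = ypath w \<gamma> \<alpha> y0 (shocks_forcing w \<gamma> \<alpha> (Suc \<tau>) d eps) \<omega> n" if "n \<le> T" for n
    unfolding ypath_def using that
    by (auto simp: ez_def shocks_forcing_def L_def intro!: yseq_cong)
  have "Cev w \<gamma> \<alpha> (\<lambda>z. z 0 = 1) ez s t d (\<lambda>i\<in>L. primitive_vars i \<omega>)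
      = Cev w \<gamma> \<alpha> y0 (shocks_forcing w \<gamma> \<alpha> (Suc \<tau>) d eps) s t d \<omega>"
    using path s_le_t t_lt_T by (rule Cev_cong)
  with path[OF \<open>\<tau> \<le> T\<close>] show "(ypath w \<gamma> \<alpha> (\<lambda>z. z 0 = 1) ez (\<lambda>i\<in>L. primitive_vars i \<omega>) \<tau> = b
      \<and> Cev w \<gamma> \<alpha> (\<lambda>z. z 0 = 1) ez s t d (\<lambda>i\<in>L. primitive_vars i \<omega>))
    \<longleftrightarrow> ypath w \<gamma> \<alpha> y0 (shocks_forcing w \<gamma> \<alpha> (Suc \<tau>) d eps) \<omega> \<tau> = b
      \<and> Cev w \<gamma> \<alpha> y0 (shocks_forcing w \<gamma> \<alpha> (Suc \<tau>) d eps) s t d \<omega>"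
    by simp
qed

lemma prob_shock_ypath_Cev:
  assumes [measurable]: "Measurable.pred borel P"
  shows "\<P>(\<omega> in M. P (eps (Suc \<tau>) \<omega>) \<and> ypath w \<gamma> \<alpha> y0 eps \<omega> \<tau> = b \<and> Cev w \<gamma> \<alpha> y0 eps s t d \<omega>)
    = \<P>(\<omega> in M. P (eps (Suc \<tau>) \<omega>) \<and> next_choice w \<gamma> \<alpha> (Suc \<tau>) b (eps (Suc \<tau>) \<omega>) = d)
      * frozen_prob s t \<tau> b d"
proof -
  let ?rest = "\<lambda>\<omega>. \<lambda>i\<in>{0..T} - {Suc \<tau>}. primitive_vars i \<omega>"
  let ?H = "{x. P x \<and> next_choice w \<gamma> \<alpha> (Suc \<tau>) b x = d}"
  obtain Q where Q_meas: "Measurable.pred (PiM ({0..T} - {Suc \<tau>}) (\<lambda>_. borel)) Q"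
    and frozen: "\<And>\<omega>. Q (?rest \<omega>) \<longleftrightarrow>
      ypath w \<gamma> \<alpha> y0 (shocks_forcing w \<gamma> \<alpha> (Suc \<tau>) d eps) \<omega> \<tau> = b
      \<and> Cev w \<gamma> \<alpha> y0 (shocks_forcing w \<gamma> \<alpha> (Suc \<tau>) d eps) s t d \<omega>"
    using frozen_event_measurable_rest[where b = b and d = d] by blast
  have next_in: "Suc \<tau> \<in> {0..T}" "Suc \<tau> \<in> {s + 1, t + 1}"
    using \<tau> s_le_t t_lt_T by auto
  have event: "{\<omega> \<in> space M. P (eps (Suc \<tau>) \<omega>) \<and> ypath w \<gamma> \<alpha> y0 eps \<omega> \<tau> = b \<and> Cev w \<gamma> \<alpha> y0 eps s t d \<omega>}
      = {\<omega> \<in> space M. primitive_vars (Suc \<tau>) \<omega> \<in> ?H \<and> Q (?rest \<omega>)}"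
    using Cev_freeze[OF next_in(2), of w \<gamma> \<alpha> y0 eps _ b d] unfolding frozen by auto
  have "\<P>(\<omega> in M. primitive_vars (Suc \<tau>) \<omega> \<in> ?H \<and> Q (?rest \<omega>))
      = \<P>(\<omega> in M. primitive_vars (Suc \<tau>) \<omega> \<in> ?H) * \<P>(\<omega> in M. Q (?rest \<omega>))"
    using next_in(1) Q_meas
    by (intro prob_indep_coordinate_rest[OF indep_initial_shocks]) (auto simp: next_choice_def)
  then show ?thesis
    unfolding event frozen frozen_prob_def by simp
qed

lemma prob_shock_Cev:
  assumes [measurable]: "Measurable.pred borel P"
  shows "\<P>(\<omega> in M. P (eps (Suc \<tau>) \<omega>) \<and> Cev w \<gamma> \<alpha> y0 eps s t d \<omega>)
    = \<P>(\<omega> in M. P (eps (Suc \<tau>) \<omega>) \<and> next_choice w \<gamma> \<alpha> (Suc \<tau>) True (eps (Suc \<tau>) \<omega>) = d)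
        * frozen_prob s t \<tau> True d
      + \<P>(\<omega> in M. P (eps (Suc \<tau>) \<omega>) \<and> next_choice w \<gamma> \<alpha> (Suc \<tau>) False (eps (Suc \<tau>) \<omega>) = d)
        * frozen_prob s t \<tau> False d"
proof -
  have [measurable]: "Measurable.pred M (\<lambda>\<omega>. ypath w \<gamma> \<alpha> y0 eps \<omega> \<tau>)"
    using \<tau> s_le_t t_lt_T by (intro measurable_ypath measurable_initial measurable_shock) auto
  have [measurable]: "Measurable.pred M (Cev w \<gamma> \<alpha> y0 eps s t d)"
    using s_le_t t_lt_T by (intro measurable_Cev measurable_initial measurable_shock)
  have "{\<omega> \<in> space M. P (eps (Suc \<tau>) \<omega>) \<and> Cev w \<gamma> \<alpha> y0 eps s t d \<omega>}
    = {\<omega> \<in> space M. P (eps (Suc \<tau>) \<omega>) \<and> ypath w \<gamma> \<alpha> y0 eps \<omega> \<tau> = True \<and> Cev w \<gamma> \<alpha> y0 eps s t d \<omega>}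
      \<union> {\<omega> \<in> space M. P (eps (Suc \<tau>) \<omega>) \<and> ypath w \<gamma> \<alpha> y0 eps \<omega> \<tau> = False \<and> Cev w \<gamma> \<alpha> y0 eps s t d \<omega>}"
    (is "_ = ?A \<union> ?B")
    by auto
  moreover have "prob (?A \<union> ?B) = prob ?A + prob ?B"
    by (rule finite_measure_Union) (measurable, auto)
  ultimately show ?thesis
    unfolding prob_shock_ypath_Cev[OF assms] by simp
qed

context
  fixes F :: "real \<Rightarrow> real"
  assumes \<gamma>_nonpos: "\<gamma> \<le> 0" and cdf: "\<And>x. \<P>(\<omega> in M. eps (Suc \<tau>) \<omega> < x) = F x"
begin

lemma cdf_bounds:
  "0 \<le> F (w (Suc \<tau>) + \<gamma> + \<alpha>)" "F (w (Suc \<tau>) + \<gamma> + \<alpha>) \<le> F (w (Suc \<tau>) + \<alpha>)" "F (w (Suc \<tau>) + \<alpha>) \<le> 1"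
proof -
  have "F (w (Suc \<tau>) + \<alpha>) - F (w (Suc \<tau>) + \<gamma> + \<alpha>) = \<P>(\<omega> in M.
      w (Suc \<tau>) + \<gamma> + \<alpha> \<le> eps (Suc \<tau>) \<omega> \<and> eps (Suc \<tau>) \<omega> < w (Suc \<tau>) + \<alpha>)"
    using \<gamma>_nonpos by (intro prob_interval_eq_cdf[symmetric] cdf) auto
  then show "F (w (Suc \<tau>) + \<gamma> + \<alpha>) \<le> F (w (Suc \<tau>) + \<alpha>)"
    by (metis diff_ge_0_iff_ge measure_nonneg)
  show "0 \<le> F (w (Suc \<tau>) + \<gamma> + \<alpha>)" "F (w (Suc \<tau>) + \<alpha>) \<le> 1"
    unfolding cdf[symmetric] by (simp_all add: measure_nonneg)
qed

lemma cond_prob_shock_Cev_True: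
  assumes pos: "0 < \<P>(\<omega> in M. Cev w \<gamma> \<alpha> y0 eps s t True \<omega>)"
  shows "\<P>(\<omega> in M. eps (Suc \<tau>) \<omega> < w (Suc \<tau>) + \<gamma> + \<alpha> \<bar> Cev w \<gamma> \<alpha> y0 eps s t True \<omega>)
    = \<P>(\<omega> in M. ypath w \<gamma> \<alpha> y0 eps \<omega> \<tau> \<bar> Cev w \<gamma> \<alpha> y0 eps s t True \<omega>)
      + F (w (Suc \<tau>) + \<gamma> + \<alpha>) / F (w (Suc \<tau>) + \<alpha>)
        * (1 - \<P>(\<omega> in M. ypath w \<gamma> \<alpha> y0 eps \<omega> \<tau> \<bar> Cev w \<gamma> \<alpha> y0 eps s t True \<omega>))"
proof -
  define k where "k = Suc \<tau>"
  define c1 where "c1 = w k + \<gamma> + \<alpha>"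
  define c2 where "c2 = w k + \<alpha>"
  define p where "p b = frozen_prob s t \<tau> b True" for b
  have Fk: "\<P>(\<omega> in M. eps k \<omega> < x) = F x" for x
    using cdf by (simp add: k_def)
  have [simp]: "next_choice w \<gamma> \<alpha> k True x \<longleftrightarrow> x < c1" "next_choice w \<gamma> \<alpha> k False x \<longleftrightarrow> x < c2" for x
    by (auto simp: next_choice_def c1_def c2_def)
  have "{\<omega> \<in> space M. eps k \<omega> < c1 \<and> eps k \<omega> < c2} = {\<omega> \<in> space M. eps k \<omega> < c1}"
    using \<gamma>_nonpos by (auto simp: c1_def c2_def)
  then have num: "\<P>(\<omega> in M. eps k \<omega> < c1 \<and> Cev w \<gamma> \<alpha> y0 eps s t True \<omega>)
      = F c1 * p True + F c1 * p False"
    using prob_shock_Cev[of "\<lambda>x. x < c1" True] by (simp add: k_def[symmetric] p_def Fk)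
  have den: "\<P>(\<omega> in M. Cev w \<gamma> \<alpha> y0 eps s t True \<omega>) = F c1 * p True + F c2 * p False"
    using prob_shock_Cev[of "\<lambda>_. True" True] by (simp add: k_def[symmetric] p_def Fk)
  have joint: "\<P>(\<omega> in M. ypath w \<gamma> \<alpha> y0 eps \<omega> \<tau> \<and> Cev w \<gamma> \<alpha> y0 eps s t True \<omega>) = F c1 * p True"
    using prob_shock_ypath_Cev[of "\<lambda>_. True" True True] by (simp add: k_def[symmetric] p_def Fk)
  have "F c2 \<noteq> 0"
  proof
    assume "F c2 = 0"
    with cdf_bounds have "F c1 = 0"
      unfolding c1_def c2_def k_def by linarith
    with \<open>F c2 = 0\<close> pos den show False
      by simp
  qed
  moreover have D: "F c1 * p True + F c2 * p False \<noteq> 0"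
    using pos den by simp
  ultimately show ?thesis
    using ratio_as_mixture[OF D, of "F c1" 1 "F c1" "F c1 / F c2"]
    unfolding cond_prob_def num den joint k_def[symmetric] c1_def[symmetric] c2_def[symmetric]
    by simp
qed

lemma cond_prob_shock_Cev_False:
  assumes pos: "0 < \<P>(\<omega> in M. Cev w \<gamma> \<alpha> y0 eps s t False \<omega>)"
  shows "\<P>(\<omega> in M. w (Suc \<tau>) + \<gamma> + \<alpha> \<le> eps (Suc \<tau>) \<omega> \<and> eps (Suc \<tau>) \<omega> < w (Suc \<tau>) + \<alpha>
        \<bar> Cev w \<gamma> \<alpha> y0 eps s t False \<omega>)
      = (F (w (Suc \<tau>) + \<alpha>) - F (w (Suc \<tau>) + \<gamma> + \<alpha>)) / (1 - F (w (Suc \<tau>) + \<gamma> + \<alpha>))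
        * \<P>(\<omega> in M. ypath w \<gamma> \<alpha> y0 eps \<omega> \<tau> \<bar> Cev w \<gamma> \<alpha> y0 eps s t False \<omega>)"
      (is ?middle)
    and "\<P>(\<omega> in M. w (Suc \<tau>) + \<alpha> \<le> eps (Suc \<tau>) \<omega> \<bar> Cev w \<gamma> \<alpha> y0 eps s t False \<omega>)
      = (1 - F (w (Suc \<tau>) + \<alpha>)) / (1 - F (w (Suc \<tau>) + \<gamma> + \<alpha>))
        * \<P>(\<omega> in M. ypath w \<gamma> \<alpha> y0 eps \<omega> \<tau> \<bar> Cev w \<gamma> \<alpha> y0 eps s t False \<omega>)
        + 1 - \<P>(\<omega> in M. ypath w \<gamma> \<alpha> y0 eps \<omega> \<tau> \<bar> Cev w \<gamma> \<alpha> y0 eps s t False \<omega>)"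
      (is ?upper)
proof -
  define k where "k = Suc \<tau>"
  define c1 where "c1 = w k + \<gamma> + \<alpha>"
  define c2 where "c2 = w k + \<alpha>"
  define p where "p b = frozen_prob s t \<tau> b False" for b
  have Fk: "\<P>(\<omega> in M. eps k \<omega> < x) = F x" for x
    using cdf by (simp add: k_def)
  have ge: "\<P>(\<omega> in M. x \<le> eps k \<omega>) = 1 - F x" for x
    using Fk by (intro prob_ge_eq_cdf) (auto simp: k_def)
  have "c1 \<le> c2"
    using \<gamma>_nonpos by (simp add: c1_def c2_def)
  then have interval: "\<P>(\<omega> in M. c1 \<le> eps k \<omega> \<and> eps k \<omega> < c2) = F c2 - F c1"
    using Fk by (intro prob_interval_eq_cdf) (auto simp: k_def)
  have [simp]: "\<not> next_choice w \<gamma> \<alpha> k True x \<longleftrightarrow> c1 \<le> x" "\<not> next_choice w \<gamma> \<alpha> k False x \<longleftrightarrow> c2 \<le> x" for x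
    by (auto simp: next_choice_def c1_def c2_def)
  have mid_lower: "{\<omega> \<in> space M. c1 \<le> eps k \<omega> \<and> eps k \<omega> < c2 \<and> c1 \<le> eps k \<omega>}
      = {\<omega> \<in> space M. c1 \<le> eps k \<omega> \<and> eps k \<omega> < c2}"
    and mid_upper: "{\<omega> \<in> space M. c1 \<le> eps k \<omega> \<and> eps k \<omega> < c2 \<and> c2 \<le> eps k \<omega>} = {}"
    by auto
  have num_mid: "\<P>(\<omega> in M. c1 \<le> eps k \<omega> \<and> eps k \<omega> < c2 \<and> Cev w \<gamma> \<alpha> y0 eps s t False \<omega>)
      = (F c2 - F c1) * p True"
    using prob_shock_Cev[of "\<lambda>x. c1 \<le> x \<and> x < c2" False]
    by (simp add: k_def[symmetric] p_def interval mid_lower mid_upper)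
  have "{\<omega> \<in> space M. c2 \<le> eps k \<omega> \<and> c1 \<le> eps k \<omega>} = {\<omega> \<in> space M. c2 \<le> eps k \<omega>}"
    using \<open>c1 \<le> c2\<close> by auto
  then have num_up: "\<P>(\<omega> in M. c2 \<le> eps k \<omega> \<and> Cev w \<gamma> \<alpha> y0 eps s t False \<omega>)
      = (1 - F c2) * p True + (1 - F c2) * p False"
    using prob_shock_Cev[of "\<lambda>x. c2 \<le> x" False] by (simp add: k_def[symmetric] p_def ge)
  have den: "\<P>(\<omega> in M. Cev w \<gamma> \<alpha> y0 eps s t False \<omega>) = (1 - F c1) * p True + (1 - F c2) * p False"
    using prob_shock_Cev[of "\<lambda>_. True" False] by (simp add: k_def[symmetric] p_def ge)
  have joint: "\<P>(\<omega> in M. ypath w \<gamma> \<alpha> y0 eps \<omega> \<tau> \<and> Cev w \<gamma> \<alpha> y0 eps s t False \<omega>)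
      = (1 - F c1) * p True"
    using prob_shock_ypath_Cev[of "\<lambda>_. True" True False] by (simp add: k_def[symmetric] p_def ge)
  have "1 - F c1 \<noteq> 0"
  proof
    assume "1 - F c1 = 0"
    with cdf_bounds have "1 - F c2 = 0"
      unfolding c1_def c2_def k_def by linarith
    with \<open>1 - F c1 = 0\<close> pos den show False
      by simp
  qed
  moreover have D: "(1 - F c1) * p True + (1 - F c2) * p False \<noteq> 0"
    using pos den by simp
  ultimately show ?middle and ?upper
    using ratio_as_mixture[OF D, of "F c2 - F c1" "(F c2 - F c1) / (1 - F c1)" 0 0]
      ratio_as_mixture[OF D, of "1 - F c2" "(1 - F c2) / (1 - F c1)" "1 - F c2" 1]
    unfolding cond_prob_def conj_assoc num_mid num_up den joint
      k_def[symmetric] c1_def[symmetric] c2_def[symmetric]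
    by simp_all
qed

end

end

end

theorem lemma2:
  fixes M :: "'a measure" and eps :: "nat \<Rightarrow> 'a \<Rightarrow> real" and y0 :: "'a \<Rightarrow> bool"
    and F :: "real \<Rightarrow> real" and w :: "nat \<Rightarrow> real" and \<gamma> \<alpha> :: real
    and T s t \<tau> :: nat
  assumes P: "prob_space M"
    and gneg: "\<gamma> < 0"
    and s1: "1 \<le> s" and st: "s + 2 \<le> t" and tT: "t + 1 \<le> T"
    and tau: "\<tau> \<in> {s, t}"
    and indep: "prob_space.indep_vars M (\<lambda>_. borel)
        (\<lambda>i \<omega>. if i = 0 then (if y0 \<omega> then 1 else 0) else eps i \<omega>) {0..T}"
    and abscont: "\<forall>i\<in>{1..T}. \<exists>g. distributed M lborel (eps i) g"
    and cdf: "\<forall>i\<in>{1..T}. \<forall>c. measure M {\<omega> \<in> space M. eps i \<omega> \<le> c} = F c"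
    and supp: "strict_mono F"
    and C1pos: "measure M {\<omega> \<in> space M. Cev w \<gamma> \<alpha> y0 eps s t True \<omega>} > 0"
    and C0pos: "measure M {\<omega> \<in> space M. Cev w \<gamma> \<alpha> y0 eps s t False \<omega>} > 0"
  shows "\<P>(\<omega> in M. eps (\<tau>+1) \<omega> < w (\<tau>+1) + \<gamma> + \<alpha> \<bar> Cev w \<gamma> \<alpha> y0 eps s t True \<omega>)
           = \<P>(\<omega> in M. ypath w \<gamma> \<alpha> y0 eps \<omega> \<tau> \<bar> Cev w \<gamma> \<alpha> y0 eps s t True \<omega>)
             + F (w (\<tau>+1) + \<gamma> + \<alpha>) / F (w (\<tau>+1) + \<alpha>)
               * (1 - \<P>(\<omega> in M. ypath w \<gamma> \<alpha> y0 eps \<omega> \<tau> \<bar> Cev w \<gamma> \<alpha> y0 eps s t True \<omega>))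
       \<and> \<P>(\<omega> in M. w (\<tau>+1) + \<gamma> + \<alpha> \<le> eps (\<tau>+1) \<omega> \<and> eps (\<tau>+1) \<omega> < w (\<tau>+1) + \<alpha>
              \<bar> Cev w \<gamma> \<alpha> y0 eps s t False \<omega>)
           = (F (w (\<tau>+1) + \<alpha>) - F (w (\<tau>+1) + \<gamma> + \<alpha>)) / (1 - F (w (\<tau>+1) + \<gamma> + \<alpha>))
             * \<P>(\<omega> in M. ypath w \<gamma> \<alpha> y0 eps \<omega> \<tau> \<bar> Cev w \<gamma> \<alpha> y0 eps s t False \<omega>)
       \<and> \<P>(\<omega> in M. eps (\<tau>+1) \<omega> \<ge> w (\<tau>+1) + \<alpha> \<bar> Cev w \<gamma> \<alpha> y0 eps s t False \<omega>)
           = (1 - F (w (\<tau>+1) + \<alpha>)) / (1 - F (w (\<tau>+1) + \<gamma> + \<alpha>))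
             * \<P>(\<omega> in M. ypath w \<gamma> \<alpha> y0 eps \<omega> \<tau> \<bar> Cev w \<gamma> \<alpha> y0 eps s t False \<omega>)
             + 1 - \<P>(\<omega> in M. ypath w \<gamma> \<alpha> y0 eps \<omega> \<tau> \<bar> Cev w \<gamma> \<alpha> y0 eps s t False \<omega>)"
proof -
  interpret binary_choice_panel M eps y0 w \<gamma> \<alpha> T
    using P indep by (simp add: binary_choice_panel_def binary_choice_panel_axioms_def)
  have s_le_t: "s \<le> t"
    using st by simp
  have next_in: "Suc \<tau> \<in> {1..T}"
    using tau st tT by auto
  then obtain g where "distributed M lborel (eps (Suc \<tau>)) g"
    using abscont by blast
  then have strict_cdf: "\<P>(\<omega> in M. eps (Suc \<tau>) \<omega> < x) = F x" for x
    using cdf next_in by (simp add: prob_less_eq_prob_le_if_density)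
  show ?thesis
    using cond_prob_shock_Cev_True[OF tau s_le_t tT _ strict_cdf C1pos]
      cond_prob_shock_Cev_False[OF tau s_le_t tT _ strict_cdf C0pos] gneg
    by simp
qed

end
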